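(* Let $n,m,p,q\ge 1$ be integers and let $A\in\mathbb{R}^{n\times n}$, $B\in\mathbb{R}^{n\times m}$, $C\in\mathbb{R}^{p\times n}$. Consider the linear system $$\delta x_t = A\,\delta x_{t-1} + B\,\delta u_{t-1},\qquad \delta z_t = C\,\delta x_t ,$$ with states $\delta x_t\in\mathbb{R}^n$, inputs $\delta u_t\in\mathbb{R}^m$ and outputs $\delta z_t\in\mathbb{R}^p$. Define the $qp\times n$ matrix $$\mathcal{O}_q = \begin{bmatrix} CA^{q-1}\\ CA^{q-2}\\ \vdots\\ CA\\ C\end{bmatrix},$$ and the $qp\times qm$ block matrix $\mathcal{H}_q$ whose $(i,j)$ block ($i,j=1,\dots,q$, blocks of size $p\times m$) equals $CA^{j-i-1}B$ if $j>i$ and $0$ if $j\le i$. Suppose $\mathcal{O}_q$ has full column rank, and let $\mathcal{O}_q^+$ denote its Moore–Penrose pseudoinverse. Define $p\times p$ matrices $\alpha_{t-1},\dots,\alpha_{t-q}$ and $p\times m$ matrices $\beta_{t-1},\dots,\beta_{t-q}$ by $$[\alpha_{t-1}\,|\,\alpha_{t-2}\,|\cdots|\,\alpha_{t-q}] = CA^{q}\mathcal{O}_q^+,$$ $$[\beta_{t-1}\,|\,\beta_{t-2}\,|\cdots|\,\beta_{t-q}] = \begin{bmatrix} CB & CAB & \cdots & CA^{q-1}B\end{bmatrix} - CA^{q}\mathcal{O}_q^+\mathcal{H}_q .$$ Then every trajectory of the system exactly satisfies the ARMA model of order $q$: $$\delta z_t = \alpha_{t-1}\delta z_{t-1}+\cdots+\alpha_{t-q}\delta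 z_{t-q} + \beta_{t-1}\delta u_{t-1}+\cdots+\beta_{t-q}\delta u_{t-q}$$ for all $t$ for which the indices $t-1,\dots,t-q$ are defined.
   Context: The subscripts on $\alpha$ and $\beta$ only indicate which past output/input each coefficient multiplies; for this time-invariant system the coefficients do not depend on $t$. The blocks of $CA^q\mathcal{O}_q^+$ (size $p\times p$) and of the right-hand side of the $\beta$ equation (size $p\times m$) are read left to right. *)

theory Defs
  imports "Jordan_Normal_Form.DL_Rank"
begin

text \<open>Extended observability matrix O_q (qp x n): block row i (i = 0..q-1) is C A^(q-1-i).\<close>
definition obs_mat :: "real mat \<Rightarrow> real mat \<Rightarrow> nat \<Rightarrow> real mat" where
  "obs_mat A C q =
     mat (q * dim_row C) (dim_col A)
       (\<lambda>(i, j). (C * A ^\<^sub>m (q - 1 - i div dim_row C)) $$ (i mod dim_row C, j))"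

text \<open>Block Toeplitz matrix H_q (qp x qm): block (i,j) (0-based) is C A^(j-i-1) B if j > i, else 0.\<close>
definition toep_mat :: "real mat \<Rightarrow> real mat \<Rightarrow> real mat \<Rightarrow> nat \<Rightarrow> real mat" where
  "toep_mat A B C q =
     mat (q * dim_row C) (q * dim_col B)
       (\<lambda>(i, j). if j div dim_col B > i div dim_row C
                 then (C * A ^\<^sub>m (j div dim_col B - i div dim_row C - 1) * B)
                        $$ (i mod dim_row C, j mod dim_col B)
                 else 0)"

definition markov_row :: "real mat \<Rightarrow> real mat \<Rightarrow> real mat \<Rightarrow> nat \<Rightarrow> real mat" where
  "markov_row A B C q =
     mat (dim_row C) (q * dim_col B)
       (\<lambda>(i, j). (C * A ^\<^sub>m (j div dim_col B) * B) $$ (i, j mod dim_col B))"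

definition is_mp_pinv :: "real mat \<Rightarrow> real mat \<Rightarrow> bool" where
  "is_mp_pinv M X \<longleftrightarrow> X \<in> carrier_mat (dim_col M) (dim_row M) \<and>
      M * X * M = M \<and> X * M * X = X \<and>
      transpose_mat (M * X) = M * X \<and> transpose_mat (X * M) = X * M"

definition mp_pinv :: "real mat \<Rightarrow> real mat" where
  "mp_pinv M = (THE X. is_mp_pinv M X)"

definition col_block :: "real mat \<Rightarrow> nat \<Rightarrow> nat \<Rightarrow> real mat" where
  "col_block M w k = mat (dim_row M) w (\<lambda>(i, j). M $$ (i, k * w + j))"

end

(*
  Stack the q most recent outputs and inputs,
  Z = [z(t-1); ...; z(t-q)] and U = [u(t-1); ...; u(t-q)].
  Unrolling the state recursion from time t - q gives
    Z = O_q x(t-q) + H_q U   and   z(t) = C A^q x(t-q) + [CB | CAB | ... | CA^(q-1)B] U.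
  Full column rank makes the pseudoinverse O_q^+ = (O_q^T O_q)^-1 O_q^T a left inverse of O_q,
  so x(t-q) = O_q^+ (Z - H_q U); substituting into the second identity yields
  z(t) = C A^q O_q^+ Z + ([CB | ... | CA^(q-1)B] - C A^q O_q^+ H_q) U,
  whose column blocks are the alpha and beta coefficients.
*)
theory Submission
  imports Defs
begin

lemma (in vec_space) full_col_rank_mult_vec_eq_0:
  assumes M: "M \<in> carrier_mat n nc" and rank: "rank M = nc"
    and v: "v \<in> carrier_vec nc" and Mv: "M *\<^sub>v v = 0\<^sub>v n"
  shows "v = 0\<^sub>v nc"
proof (rule ccontr)
  assume v_nonzero: "v \<noteq> 0\<^sub>v nc"
  have distinct: "distinct (cols M)"
  proof (rule ccontr)
    assume "\<not> distinct (cols M)"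
    then have card_cols: "card (set (cols M)) < nc"
      using M by (metis card_distinct cols_length carrier_matD(2) card_length le_neq_implies_less)
    obtain S where S: "maximal S (\<lambda>T. T \<subseteq> set (cols M) \<and> lin_indpt T)"
      using maximal_exists[of "\<lambda>T. T \<subseteq> set (cols M) \<and> lin_indpt T" "card (set (cols M))" "{}"]
      by (meson List.finite_set card_mono empty_iff empty_subsetI finite_lin_indpt2 rev_finite_subset)
    then have "card S \<le> card (set (cols M))" by (simp add: card_mono maximal_def)
    then show False using rank_card_indpt[OF M S] rank card_cols by simp
  qed
  show False
    using lin_depI[OF M v v_nonzero Mv distinct] full_rank_lin_indpt[OF M rank distinct] by blast
qed

lemma det_gram_mat_nonzero:
  fixes M :: "real mat"
  assumes M: "M \<in> carrier_mat N n"
    and inj: "\<And>v. v \<in> carrier_vec n \<Longrightarrow> M *\<^sub>v v = 0\<^sub>v N \<Longrightarrow> v = 0\<^sub>v n"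
  shows "det (transpose_mat M * M) \<noteq> 0"
proof -
  have "v = 0\<^sub>v n" if v: "v \<in> carrier_vec n" and Kv: "(transpose_mat M * M) *\<^sub>v v = 0\<^sub>v n" for v
  proof -
    have Mv: "M *\<^sub>v v \<in> carrier_vec N" using M v by simp
    have "(M *\<^sub>v v) \<bullet> (M *\<^sub>v v) = (transpose_mat M *\<^sub>v (M *\<^sub>v v)) \<bullet> v"
      using transpose_vec_mult_scalar[OF M v Mv] by simp
    also have "transpose_mat M *\<^sub>v (M *\<^sub>v v) = 0\<^sub>v n"
      using assoc_mult_mat_vec[of "transpose_mat M" n N M n v] M v Kv by simp
    finally have "(M *\<^sub>v v) \<bullet> (M *\<^sub>v v) = 0" using v by simp
    then have "M *\<^sub>v v = 0\<^sub>v N" using conjugate_square_eq_0_vec[OF Mv] by simp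
    then show ?thesis using inj v by blast
  qed
  moreover have "transpose_mat M * M \<in> carrier_mat n n" using M by simp
  ultimately show ?thesis using det_0_iff_vec_prod_zero_field by blast
qed

lemma inj_mult_mat_left_cancel:
  fixes M :: "'a :: comm_ring_1 mat"
  assumes M: "M \<in> carrier_mat N n"
    and inj: "\<And>v. v \<in> carrier_vec n \<Longrightarrow> M *\<^sub>v v = 0\<^sub>v N \<Longrightarrow> v = 0\<^sub>v n"
    and D1: "D1 \<in> carrier_mat n k" and D2: "D2 \<in> carrier_mat n k"
    and eq: "M * D1 = M * D2"
  shows "D1 = D2"
proof (rule eq_matI)
  fix i j assume i: "i < dim_row D2" and j: "j < dim_col D2"
  have c1: "col D1 j \<in> carrier_vec n" and c2: "col D2 j \<in> carrier_vec n"
    using D1 D2 by (auto intro: carrier_vecI)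
  have jk: "j < k" using j D2 by simp
  have "M *\<^sub>v (col D1 j - col D2 j) = M *\<^sub>v col D1 j - M *\<^sub>v col D2 j"
    by (rule mult_minus_distrib_mat_vec[OF M c1 c2])
  also have "\<dots> = col (M * D2) j - col (M * D2) j"
    using col_mult2[OF M D1 jk] col_mult2[OF M D2 jk] eq by simp
  also have "\<dots> = 0\<^sub>v N"
    by (rule minus_cancel_vec) (use M D2 in \<open>auto intro: carrier_vecI\<close>)
  finally have "col D1 j - col D2 j = 0\<^sub>v n"
    using inj c1 c2 by (meson minus_carrier_vec)
  from arg_cong[OF this, of "\<lambda>v. v $ i"] show "D1 $$ (i, j) = D2 $$ (i, j)"
    using D1 D2 i j by simp
qed (use D1 D2 in auto)

lemma is_mp_pinvD:
  assumes "is_mp_pinv M X" and "M \<in> carrier_mat N n"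
  shows "X \<in> carrier_mat n N" and "M * X * M = M" and "X * M * X = X"
    and "transpose_mat (M * X) = M * X" and "transpose_mat (X * M) = X * M"
  using assms unfolding is_mp_pinv_def by auto

lemma is_mp_pinv_left_inverse:
  assumes M: "M \<in> carrier_mat N n"
    and inj: "\<And>v. v \<in> carrier_vec n \<Longrightarrow> M *\<^sub>v v = 0\<^sub>v N \<Longrightarrow> v = 0\<^sub>v n"
    and Y: "is_mp_pinv M Y"
  shows "Y * M = 1\<^sub>m n"
proof -
  have Yc: "Y \<in> carrier_mat n N" and MYM: "M * Y * M = M"
    using is_mp_pinvD[OF Y M] by auto
  have "M * (Y * M) = M * 1\<^sub>m n" using assoc_mult_mat[OF M Yc M] MYM M by simp
  then show ?thesis
    using inj_mult_mat_left_cancel[of M N n "Y * M" n "1\<^sub>m n"] M inj Yc by simp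
qed

lemma is_mp_pinv_unique:
  assumes M: "M \<in> carrier_mat N n"
    and inj: "\<And>v. v \<in> carrier_vec n \<Longrightarrow> M *\<^sub>v v = 0\<^sub>v N \<Longrightarrow> v = 0\<^sub>v n"
    and X: "is_mp_pinv M X" and Y: "is_mp_pinv M Y"
  shows "Y = X"
proof -
  have Xc: "X \<in> carrier_mat n N" and MX_sym: "transpose_mat (M * X) = M * X"
    using is_mp_pinvD[OF X M] by auto
  have Yc: "Y \<in> carrier_mat n N" and MYM: "M * Y * M = M" and YMY: "Y * M * Y = Y"
    and MY_sym: "transpose_mat (M * Y) = M * Y"
    using is_mp_pinvD[OF Y M] by auto
  have MX: "M * X \<in> carrier_mat N N" and MY: "M * Y \<in> carrier_mat N N"
    using M Xc Yc by auto
  have "M * Y = transpose_mat (M * X * M * Y)" using MY_sym is_mp_pinvD(2)[OF X M] by simp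
  also have "\<dots> = transpose_mat (M * Y) * transpose_mat (M * X)"
    using assoc_mult_mat[OF MX M Yc] transpose_mult[OF MX MY] by simp
  also have "\<dots> = M * Y * M * X"
    using MY_sym MX_sym assoc_mult_mat[OF MY M Xc] by simp
  finally have MY_eq: "M * Y = M * X" using MYM by simp
  have "Y = Y * (M * Y)" using YMY assoc_mult_mat[OF Yc M Yc] by simp
  also have "\<dots> = Y * M * X" using MY_eq assoc_mult_mat[OF Yc M Xc] by simp
  finally show ?thesis using is_mp_pinv_left_inverse[OF M inj Y] Xc by simp
qed

text \<open>For injective \<open>M\<close> the pseudoinverse is \<open>(M\<^sup>T M)\<inverse> M\<^sup>T\<close>.\<close>

lemma is_mp_pinv_exists:
  fixes M :: "real mat"
  assumes M: "M \<in> carrier_mat N n"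
    and inj: "\<And>v. v \<in> carrier_vec n \<Longrightarrow> M *\<^sub>v v = 0\<^sub>v N \<Longrightarrow> v = 0\<^sub>v n"
  shows "\<exists>X. is_mp_pinv M X"
proof -
  define K where "K = transpose_mat M * M"
  have K: "K \<in> carrier_mat n n" using M by (simp add: K_def)
  obtain G where G: "G \<in> carrier_mat n n" "G * K = 1\<^sub>m n" "K * G = 1\<^sub>m n"
    using det_non_zero_imp_unit[OF K det_gram_mat_nonzero[OF M inj, folded K_def], of "()"]
    unfolding Units_def ring_mat_def by auto
  have K_sym: "transpose_mat K = K" unfolding K_def using M by (simp add: transpose_mult)
  have G_sym: "transpose_mat G = G"
  proof -
    have KGt: "K * transpose_mat G = 1\<^sub>m n"
      using arg_cong[OF G(2), of transpose_mat] transpose_mult[OF G(1) K] K_sym by simp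
    have "transpose_mat G = G * K * transpose_mat G" using G by simp
    also have "\<dots> = G * (K * transpose_mat G)" by (rule assoc_mult_mat[OF G(1) K]) (use G in simp)
    also have "\<dots> = G" using KGt G by simp
    finally show ?thesis .
  qed
  define X where "X = G * transpose_mat M"
  have X: "X \<in> carrier_mat n N" using G M by (simp add: X_def)
  have "X * M = G * K"
    unfolding X_def K_def using assoc_mult_mat[OF G(1), of "transpose_mat M" N M n] M by simp
  then have XM: "X * M = 1\<^sub>m n" using G(2) by simp
  have MX_sym: "transpose_mat (M * X) = M * X"
  proof -
    have "transpose_mat (M * X) = transpose_mat X * transpose_mat M"
      using transpose_mult[OF M X] .
    also have "\<dots> = M * G * transpose_mat M"
      unfolding X_def using transpose_mult[OF G(1), of "transpose_mat M" N] M G_sym by simp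
    also have "\<dots> = M * X"
      unfolding X_def using assoc_mult_mat[OF M G(1), of "transpose_mat M" N] M by simp
    finally show ?thesis .
  qed
  have "M * X * M = M" using assoc_mult_mat[OF M X M] XM M by simp
  moreover have "X * M * X = X" using XM X by simp
  moreover have "transpose_mat (X * M) = X * M" using XM by simp
  ultimately have "is_mp_pinv M X"
    unfolding is_mp_pinv_def using X MX_sym M by blast
  then show ?thesis ..
qed

lemma mp_pinv_left_inverse:
  fixes M :: "real mat"
  assumes M: "M \<in> carrier_mat N n"
    and inj: "\<And>v. v \<in> carrier_vec n \<Longrightarrow> M *\<^sub>v v = 0\<^sub>v N \<Longrightarrow> v = 0\<^sub>v n"
  shows "mp_pinv M \<in> carrier_mat n N" and "mp_pinv M * M = 1\<^sub>m n"
proof -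
  have "\<exists>!X. is_mp_pinv M X"
    using is_mp_pinv_exists[OF M inj] is_mp_pinv_unique[OF M inj] by blast
  from theI'[OF this] have pinv: "is_mp_pinv M (mp_pinv M)" unfolding mp_pinv_def .
  then show "mp_pinv M \<in> carrier_mat n N" using is_mp_pinvD(1)[OF _ M] by blast
  show "mp_pinv M * M = 1\<^sub>m n" using is_mp_pinv_left_inverse[OF M inj pinv] .
qed

lemma index_mult_mat_vec_sum:
  assumes "v \<in> carrier_vec w" and "i < dim_row M" and "dim_col M = w"
  shows "(M *\<^sub>v v) $ i = (\<Sum>c<w. M $$ (i, c) * v $ c)"
  using assms by (simp add: scalar_prod_def atLeast0LessThan)

definition stack_vec :: "nat \<Rightarrow> nat \<Rightarrow> (nat \<Rightarrow> 'a vec) \<Rightarrow> 'a vec" where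
  "stack_vec q w f = vec (q * w) (\<lambda>i. f (i div w) $ (i mod w))"

lemma stack_vec_carrier [simp]: "stack_vec q w f \<in> carrier_vec (q * w)"
  by (simp add: stack_vec_def)

lemma block_index_less:
  fixes k c q w :: nat
  assumes "k < q" and "c < w"
  shows "k * w + c < q * w"
proof -
  have "Suc k * w \<le> q * w" using assms(1) by (intro mult_le_mono1) simp
  then show ?thesis using assms(2) by simp
qed

lemma index_stack_vec:
  assumes "k < q" and "c < w"
  shows "stack_vec q w f $ (k * w + c) = f k $ c"
  using assms block_index_less[OF assms] by (simp add: stack_vec_def)

lemma index_col_block_mult_vec:
  assumes "v \<in> carrier_vec w" and "i < dim_row M"
  shows "(col_block M w k *\<^sub>v v) $ i = (\<Sum>c<w. M $$ (i, k * w + c) * v $ c)"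
proof -
  have "(col_block M w k *\<^sub>v v) $ i = (\<Sum>c<w. col_block M w k $$ (i, c) * v $ c)"
    by (rule index_mult_mat_vec_sum) (use assms in \<open>simp_all add: col_block_def\<close>)
  also have "\<dots> = (\<Sum>c<w. M $$ (i, k * w + c) * v $ c)"
    using assms(2) by (intro sum.cong) (auto simp: col_block_def)
  finally show ?thesis .
qed

lemma index_mult_stack_vec:
  assumes M: "dim_col M = q * w" and i: "i < dim_row M"
    and f: "\<And>k. k < q \<Longrightarrow> f k \<in> carrier_vec w"
  shows "(M *\<^sub>v stack_vec q w f) $ i = (\<Sum>k<q. (col_block M w k *\<^sub>v f k) $ i)"
proof -
  have "(M *\<^sub>v stack_vec q w f) $ i = (\<Sum>j<q * w. M $$ (i, j) * stack_vec q w f $ j)"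
    by (rule index_mult_mat_vec_sum) (use M i in simp_all)
  also have "\<dots> = (\<Sum>k<q. \<Sum>j\<in>{k * w..<k * w + w}. M $$ (i, j) * stack_vec q w f $ j)"
    by (rule sum.nat_group[symmetric])
  also have "\<dots> = (\<Sum>k<q. \<Sum>c<w. M $$ (i, k * w + c) * f k $ c)"
  proof (rule sum.cong[OF refl])
    fix k assume "k \<in> {..<q}"
    then have k: "k < q" by simp
    have "(\<Sum>j\<in>{k * w..<k * w + w}. M $$ (i, j) * stack_vec q w f $ j)
        = (\<Sum>c<w. M $$ (i, c + k * w) * stack_vec q w f $ (c + k * w))"
      using sum.shift_bounds_nat_ivl[of "\<lambda>j. M $$ (i, j) * stack_vec q w f $ j" 0 "k * w" w]
      by (simp add: atLeast0LessThan add.commute)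
    also have "\<dots> = (\<Sum>c<w. M $$ (i, k * w + c) * f k $ c)"
      using index_stack_vec[OF k, of _ w f] by (intro sum.cong) (simp_all add: add.commute)
    finally show "(\<Sum>j\<in>{k * w..<k * w + w}. M $$ (i, j) * stack_vec q w f $ j)
        = (\<Sum>c<w. M $$ (i, k * w + c) * f k $ c)" .
  qed
  also have "\<dots> = (\<Sum>k<q. (col_block M w k *\<^sub>v f k) $ i)"
    using f i by (simp add: index_col_block_mult_vec)
  finally show ?thesis .
qed

lemma finsum_col_blocks_mult_vec:
  assumes N: "N \<in> carrier_mat p (q * w)" and f: "\<And>k. f k \<in> carrier_vec w"
    and G: "\<And>k. k \<in> {1..q} \<Longrightarrow> G k = col_block N w (k - 1)"
  shows "finsum_vec TYPE(real) p (\<lambda>k. G k *\<^sub>v f k) {1..q} = N *\<^sub>v stack_vec q w (\<lambda>k. f (Suc k))"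
proof -
  have closed: "(\<lambda>k. G k *\<^sub>v f k) \<in> {1..q} \<rightarrow> carrier_vec p"
    using N G by (auto simp: col_block_def intro!: carrier_vecI)
  show ?thesis
  proof (rule eq_vecI)
    fix i assume "i < dim_vec (N *\<^sub>v stack_vec q w (\<lambda>k. f (Suc k)))"
    then have i: "i < p" using N by simp
    have "finsum_vec TYPE(real) p (\<lambda>k. G k *\<^sub>v f k) {1..q} $ i = (\<Sum>k\<in>{1..q}. (G k *\<^sub>v f k) $ i)"
      by (rule index_finsum_vec[OF _ i closed]) simp
    also have "\<dots> = (\<Sum>k<q. (col_block N w k *\<^sub>v f (Suc k)) $ i)"
      using G sum.atLeast1_atMost_eq[of "\<lambda>k. (col_block N w (k - 1) *\<^sub>v f k) $ i" q] by simp
    also have "\<dots> = (N *\<^sub>v stack_vec q w (\<lambda>k. f (Suc k))) $ i"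
      using index_mult_stack_vec[of N q w i] N i f by simp
    finally show "finsum_vec TYPE(real) p (\<lambda>k. G k *\<^sub>v f k) {1..q} $ i
        = (N *\<^sub>v stack_vec q w (\<lambda>k. f (Suc k))) $ i" .
  qed (use N finsum_vec_closed[OF closed] in simp)
qed

lemma block_div_mod:
  fixes k r p :: nat
  assumes "r < p"
  shows "(k * p + r) div p = k" and "(k * p + r) mod p = r"
  using assms by auto

lemma index_obs_mat_mult_vec:
  assumes A: "A \<in> carrier_mat n n" and C: "C \<in> carrier_mat p n" and y: "y \<in> carrier_vec n"
    and k: "k < q" and r: "r < p"
  shows "(obs_mat A C q *\<^sub>v y) $ (k * p + r) = (C * A ^\<^sub>m (q - 1 - k) *\<^sub>v y) $ r"
proof -
  have i: "k * p + r < q * p" by (rule block_index_less[OF k r])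
  have "(obs_mat A C q *\<^sub>v y) $ (k * p + r) = (\<Sum>c<n. obs_mat A C q $$ (k * p + r, c) * y $ c)"
    by (rule index_mult_mat_vec_sum) (use A C y i in \<open>simp_all add: obs_mat_def\<close>)
  also have "\<dots> = (\<Sum>c<n. (C * A ^\<^sub>m (q - 1 - k)) $$ (r, c) * y $ c)"
    using i A C block_div_mod[OF r] by (intro sum.cong) (simp_all add: obs_mat_def)
  also have "\<dots> = (C * A ^\<^sub>m (q - 1 - k) *\<^sub>v y) $ r"
    by (rule index_mult_mat_vec_sum[symmetric]) (use A C y r in simp_all)
  finally show ?thesis .
qed

lemma col_block_markov_row:
  assumes A: "A \<in> carrier_mat n n" and B: "B \<in> carrier_mat n m" and C: "C \<in> carrier_mat p n"
    and j: "j < q"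
  shows "col_block (markov_row A B C q) m j = C * A ^\<^sub>m j * B"
proof (rule eq_matI)
  fix i c assume i: "i < dim_row (C * A ^\<^sub>m j * B)" and c: "c < dim_col (C * A ^\<^sub>m j * B)"
  then have "i < p" "c < m" using B C by auto
  then show "col_block (markov_row A B C q) m j $$ (i, c) = (C * A ^\<^sub>m j * B) $$ (i, c)"
    using block_index_less[OF j, of c m] block_div_mod[of c m j] B C
    by (simp add: col_block_def markov_row_def)
qed (use B C in \<open>simp_all add: col_block_def markov_row_def\<close>)

lemma index_col_block_toep_mat_mult_vec:
  assumes A: "A \<in> carrier_mat n n" and B: "B \<in> carrier_mat n m" and C: "C \<in> carrier_mat p n"
    and j: "j < q" and k: "k < q" and r: "r < p" and v: "v \<in> carrier_vec m"
  shows "(col_block (toep_mat A B C q) m j *\<^sub>v v) $ (k * p + r)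
    = (if k < j then (C * A ^\<^sub>m (j - k - 1) * B *\<^sub>v v) $ r else 0)"
proof -
  have i: "k * p + r < q * p" by (rule block_index_less[OF k r])
  have "(col_block (toep_mat A B C q) m j *\<^sub>v v) $ (k * p + r)
      = (\<Sum>c<m. toep_mat A B C q $$ (k * p + r, j * m + c) * v $ c)"
    by (rule index_col_block_mult_vec[OF v]) (use i C in \<open>simp add: toep_mat_def\<close>)
  also have "\<dots> = (\<Sum>c<m. (if k < j then (C * A ^\<^sub>m (j - k - 1) * B) $$ (r, c) else 0) * v $ c)"
    using i B C block_div_mod[OF r] block_index_less[OF j] block_div_mod[of _ m j]
    by (intro sum.cong) (simp_all add: toep_mat_def)
  also have "\<dots> = (if k < j then (C * A ^\<^sub>m (j - k - 1) * B *\<^sub>v v) $ r else 0)"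
    using index_mult_mat_vec_sum[OF v, of r "C * A ^\<^sub>m (j - k - 1) * B"] r B C by simp
  finally show ?thesis .
qed

lemma index_toep_mat_mult_stack_vec:
  assumes A: "A \<in> carrier_mat n n" and B: "B \<in> carrier_mat n m" and C: "C \<in> carrier_mat p n"
    and k: "k < q" and r: "r < p" and g: "\<And>j. g j \<in> carrier_vec m"
  shows "(toep_mat A B C q *\<^sub>v stack_vec q m g) $ (k * p + r)
    = (\<Sum>j<q - 1 - k. (C * A ^\<^sub>m j * B *\<^sub>v g (k + 1 + j)) $ r)"
proof -
  let ?f = "\<lambda>j. (C * A ^\<^sub>m (j - k - 1) * B *\<^sub>v g j) $ r"
  have "(toep_mat A B C q *\<^sub>v stack_vec q m g) $ (k * p + r)
      = (\<Sum>j<q. (col_block (toep_mat A B C q) m j *\<^sub>v g j) $ (k * p + r))"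
    using index_mult_stack_vec[of "toep_mat A B C q" q m "k * p + r"] block_index_less[OF k r] g B C
    by (simp add: toep_mat_def)
  also have "\<dots> = (\<Sum>j<q. if k < j then ?f j else 0)"
    using index_col_block_toep_mat_mult_vec[OF A B C _ k r g] by (intro sum.cong) simp_all
  also have "\<dots> = sum ?f {k + 1..<q}"
  proof -
    have "{j \<in> {..<q}. k < j} = {k + 1..<q}" by auto
    then show ?thesis using sum.inter_filter[of "{..<q}" ?f "\<lambda>j. k < j"] by simp
  qed
  also have "\<dots> = (\<Sum>j<q - 1 - k. (C * A ^\<^sub>m j * B *\<^sub>v g (k + 1 + j)) $ r)"
    using sum.shift_bounds_nat_ivl[of ?f 0 "k + 1" "q - 1 - k"] k
    by (simp add: atLeast0LessThan add.commute)
  finally show ?thesis .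
qed

lemma eliminate_state_by_left_inverse:
  fixes Ob L F H K :: "real mat"
  assumes Ob: "Ob \<in> carrier_mat N n" and L: "L \<in> carrier_mat n N" and L_Ob: "L * Ob = 1\<^sub>m n"
    and F: "F \<in> carrier_mat p n" and H: "H \<in> carrier_mat N k" and K: "K \<in> carrier_mat p k"
    and y: "y \<in> carrier_vec n" and U: "U \<in> carrier_vec k"
    and past: "Y = Ob *\<^sub>v y + H *\<^sub>v U" and now: "z = F *\<^sub>v y + K *\<^sub>v U"
  shows "z = (F * L) *\<^sub>v Y + (K - F * L * H) *\<^sub>v U"
proof -
  have FL: "F * L \<in> carrier_mat p N" using F L by simp
  have "(F * L) *\<^sub>v (Ob *\<^sub>v y) = F *\<^sub>v y"
    using assoc_mult_mat_vec[OF FL Ob y] assoc_mult_mat[OF F L Ob] L_Ob F y by simp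
  moreover have "(F * L) *\<^sub>v (H *\<^sub>v U) = (F * L * H) *\<^sub>v U"
    using assoc_mult_mat_vec[OF FL H U] by simp
  moreover have "(K - F * L * H) *\<^sub>v U = K *\<^sub>v U - (F * L * H) *\<^sub>v U"
    using minus_mult_distrib_mat_vec[OF K _ U, of "F * L * H"] FL H by simp
  ultimately show ?thesis
    unfolding past now using mult_add_distrib_mat_vec[OF FL, of "Ob *\<^sub>v y" "H *\<^sub>v U"] Ob H y U FL K F
    by (intro eq_vecI) auto
qed

locale lti_system =
  fixes A B C :: "real mat" and n m p :: nat and x u :: "nat \<Rightarrow> real vec"
  assumes A: "A \<in> carrier_mat n n" and B: "B \<in> carrier_mat n m" and C: "C \<in> carrier_mat p n"
    and x0: "x 0 \<in> carrier_vec n" and u: "\<And>t. u t \<in> carrier_vec m"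
    and state_eq: "\<And>t. x (Suc t) = A *\<^sub>v x t + B *\<^sub>v u t"
begin

lemma state_carrier: "x t \<in> carrier_vec n"
  by (induction t) (use x0 A B u state_eq in auto)

lemma output_response:
  assumes r: "r \<le> t" and D: "D \<in> carrier_mat p' n" and i: "i < p'"
  shows "(D *\<^sub>v x t) $ i = (D * A ^\<^sub>m r *\<^sub>v x (t - r)) $ i + (\<Sum>j<r. (D * A ^\<^sub>m j * B *\<^sub>v u (t - Suc j)) $ i)"
  using r
proof (induction r)
  case 0
  then show ?case using D A by simp
next
  case (Suc r)
  define s where "s = t - Suc r"
  have t_r: "t - r = Suc s" unfolding s_def using Suc.prems by simp
  have DAr: "D * A ^\<^sub>m r \<in> carrier_mat p' n" using D A by simp
  have "D * A ^\<^sub>m r *\<^sub>v x (t - r) = D * A ^\<^sub>m r *\<^sub>v (A *\<^sub>v x s) + D * A ^\<^sub>m r *\<^sub>v (B *\<^sub>v u s)"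
    unfolding t_r state_eq using mult_add_distrib_mat_vec[OF DAr] A B state_carrier u by simp
  also have "\<dots> = D * A ^\<^sub>m Suc r *\<^sub>v x s + D * A ^\<^sub>m r * B *\<^sub>v u s"
    using assoc_mult_mat_vec[OF DAr A state_carrier] assoc_mult_mat_vec[OF DAr B u]
      assoc_mult_mat[OF D pow_carrier_mat[OF A] A] D A by simp
  finally have "(D * A ^\<^sub>m r *\<^sub>v x (t - r)) $ i
      = (D * A ^\<^sub>m Suc r *\<^sub>v x s) $ i + (D * A ^\<^sub>m r * B *\<^sub>v u (t - Suc r)) $ i"
    unfolding s_def using D A B i by simp
  then show ?case using Suc by (simp add: s_def)
qed

lemma past_outputs_stacked:
  assumes "q \<le> t"
  shows "stack_vec q p (\<lambda>k. C *\<^sub>v x (t - Suc k))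
    = obs_mat A C q *\<^sub>v x (t - q) + toep_mat A B C q *\<^sub>v stack_vec q m (\<lambda>k. u (t - Suc k))"
proof (rule eq_vecI)
  fix i assume "i < dim_vec (obs_mat A C q *\<^sub>v x (t - q) + toep_mat A B C q *\<^sub>v stack_vec q m (\<lambda>k. u (t - Suc k)))"
  then have i: "i < q * p" using C by (simp add: toep_mat_def)
  then have p: "p > 0" by (cases p) auto
  define k r where "k = i div p" and "r = i mod p"
  have k: "k < q" and r: "r < p" and i_kr: "i = k * p + r"
    using i p unfolding k_def r_def by (auto simp: less_mult_imp_div_less)
  have shift: "t - Suc k - (q - 1 - k) = t - q" and sub: "t - Suc k - Suc j = t - Suc (k + 1 + j)" for j
    using assms k by auto
  have "stack_vec q p (\<lambda>k. C *\<^sub>v x (t - Suc k)) $ i = (C *\<^sub>v x (t - Suc k)) $ r"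
    unfolding i_kr by (rule index_stack_vec[OF k r])
  also have "\<dots> = (C * A ^\<^sub>m (q - 1 - k) *\<^sub>v x (t - q)) $ r
      + (\<Sum>j<q - 1 - k. (C * A ^\<^sub>m j * B *\<^sub>v u (t - Suc (k + 1 + j))) $ r)"
    using output_response[OF _ C r, of "q - 1 - k" "t - Suc k"] assms k shift sub by simp
  also have "(C * A ^\<^sub>m (q - 1 - k) *\<^sub>v x (t - q)) $ r = (obs_mat A C q *\<^sub>v x (t - q)) $ i"
    unfolding i_kr using index_obs_mat_mult_vec[OF A C state_carrier k r] by simp
  also have "(\<Sum>j<q - 1 - k. (C * A ^\<^sub>m j * B *\<^sub>v u (t - Suc (k + 1 + j))) $ r)
      = (toep_mat A B C q *\<^sub>v stack_vec q m (\<lambda>k. u (t - Suc k))) $ i"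
    unfolding i_kr using index_toep_mat_mult_stack_vec[OF A B C k r, of "\<lambda>k. u (t - Suc k)"] u by simp
  finally show "stack_vec q p (\<lambda>k. C *\<^sub>v x (t - Suc k)) $ i
      = (obs_mat A C q *\<^sub>v x (t - q) + toep_mat A B C q *\<^sub>v stack_vec q m (\<lambda>k. u (t - Suc k))) $ i"
    using i A B C by (simp add: obs_mat_def toep_mat_def)
qed (use A B C in \<open>simp add: obs_mat_def toep_mat_def\<close>)

lemma output_stacked:
  assumes "q \<le> t"
  shows "C *\<^sub>v x t = C * A ^\<^sub>m q *\<^sub>v x (t - q) + markov_row A B C q *\<^sub>v stack_vec q m (\<lambda>k. u (t - Suc k))"
proof (rule eq_vecI)
  fix r assume "r < dim_vec (C * A ^\<^sub>m q *\<^sub>v x (t - q) + markov_row A B C q *\<^sub>v stack_vec q m (\<lambda>k. u (t - Suc k)))"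
  then have r: "r < p" using C by (simp add: markov_row_def)
  have "(C *\<^sub>v x t) $ r = (C * A ^\<^sub>m q *\<^sub>v x (t - q)) $ r + (\<Sum>j<q. (C * A ^\<^sub>m j * B *\<^sub>v u (t - Suc j)) $ r)"
    by (rule output_response[OF assms C r])
  also have "(\<Sum>j<q. (C * A ^\<^sub>m j * B *\<^sub>v u (t - Suc j)) $ r)
      = (markov_row A B C q *\<^sub>v stack_vec q m (\<lambda>k. u (t - Suc k))) $ r"
    using index_mult_stack_vec[of "markov_row A B C q" q m r] col_block_markov_row[OF A B C] r u B C
    by (simp add: markov_row_def)
  finally show "(C *\<^sub>v x t) $ r
      = (C * A ^\<^sub>m q *\<^sub>v x (t - q) + markov_row A B C q *\<^sub>v stack_vec q m (\<lambda>k. u (t - Suc k))) $ r"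
    using r A B C by (simp add: markov_row_def)
qed (use A B C in \<open>simp add: markov_row_def\<close>)

end

theorem proposition1:
  fixes n m p q :: nat
    and A B C :: "real mat"
    and x u :: "nat \<Rightarrow> real vec"
    and z :: "nat \<Rightarrow> real vec"
    and \<alpha> \<beta> :: "nat \<Rightarrow> real mat"
  assumes "n \<ge> 1" "m \<ge> 1" "p \<ge> 1" "q \<ge> 1"
    and A: "A \<in> carrier_mat n n"
    and B: "B \<in> carrier_mat n m"
    and C: "C \<in> carrier_mat p n"
    and rank: "vec_space.rank (q * p) (obs_mat A C q) = n"
    and alpha: "\<And>k. k \<in> {1..q} \<Longrightarrow> \<alpha> k = col_block (C * A ^\<^sub>m q * mp_pinv (obs_mat A C q)) p (k - 1)"
    and beta: "\<And>k. k \<in> {1..q} \<Longrightarrow> \<beta> k = col_block (markov_row A B C q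
                    - C * A ^\<^sub>m q * mp_pinv (obs_mat A C q) * toep_mat A B C q) m (k - 1)"
    and x0: "x 0 \<in> carrier_vec n"
    and u_dim: "\<And>t. u t \<in> carrier_vec m"
    and dyn: "\<And>t. t \<ge> 1 \<Longrightarrow> x t = A *\<^sub>v x (t - 1) + B *\<^sub>v u (t - 1)"
    and out: "\<And>t. z t = C *\<^sub>v x t"
  shows "\<forall>t \<ge> q. z t = finsum_vec TYPE(real) p (\<lambda>k. \<alpha> k *\<^sub>v z (t - k)) {1..q}
                       + finsum_vec TYPE(real) p (\<lambda>k. \<beta> k *\<^sub>v u (t - k)) {1..q}"
proof (intro allI impI)
  fix t assume "q \<le> t"
  interpret lti_system A B C n m p x u
  proof
    show "x (Suc t) = A *\<^sub>v x t + B *\<^sub>v u t" for t using dyn[of "Suc t"] by simp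
  qed (fact A B C x0 u_dim)+
  define Ob where "Ob = obs_mat A C q"
  define P where "P = C * A ^\<^sub>m q * mp_pinv Ob"
  have Ob: "Ob \<in> carrier_mat (q * p) n" using A C by (simp add: Ob_def obs_mat_def)
  have inj: "v = 0\<^sub>v n" if "v \<in> carrier_vec n" "Ob *\<^sub>v v = 0\<^sub>v (q * p)" for v
    using vec_space.full_col_rank_mult_vec_eq_0[OF Ob rank[folded Ob_def] that] .
  note pinv = mp_pinv_left_inverse[OF Ob inj]
  have F: "C * A ^\<^sub>m q \<in> carrier_mat p n" using mult_carrier_mat[OF C pow_carrier_mat[OF A]] .
  have P: "P \<in> carrier_mat p (q * p)" unfolding P_def using mult_carrier_mat[OF F pinv(1)] .
  have H: "toep_mat A B C q \<in> carrier_mat (q * p) (q * m)" and K: "markov_row A B C q \<in> carrier_mat p (q * m)"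
    using B C by (simp_all add: toep_mat_def markov_row_def)
  have KPH: "markov_row A B C q - P * toep_mat A B C q \<in> carrier_mat p (q * m)"
    using minus_carrier_mat[OF mult_carrier_mat[OF P H]] by simp
  have "z t = P *\<^sub>v stack_vec q p (\<lambda>k. z (t - Suc k))
      + (markov_row A B C q - P * toep_mat A B C q) *\<^sub>v stack_vec q m (\<lambda>k. u (t - Suc k))"
    unfolding out P_def
    by (rule eliminate_state_by_left_inverse[OF Ob pinv F H K state_carrier stack_vec_carrier
          past_outputs_stacked[OF \<open>q \<le> t\<close>, folded Ob_def] output_stacked[OF \<open>q \<le> t\<close>]])
  also have "P *\<^sub>v stack_vec q p (\<lambda>k. z (t - Suc k)) = finsum_vec TYPE(real) p (\<lambda>k. \<alpha> k *\<^sub>v z (t - k)) {1..q}"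
    using finsum_col_blocks_mult_vec[OF P, of "\<lambda>k. z (t - k)" \<alpha>] alpha C state_carrier
    by (simp add: out P_def Ob_def)
  also have "(markov_row A B C q - P * toep_mat A B C q) *\<^sub>v stack_vec q m (\<lambda>k. u (t - Suc k))
      = finsum_vec TYPE(real) p (\<lambda>k. \<beta> k *\<^sub>v u (t - k)) {1..q}"
    using finsum_col_blocks_mult_vec[OF KPH[unfolded P_def Ob_def], of "\<lambda>k. u (t - k)" \<beta>] beta u_dim
    by (simp add: P_def Ob_def)
  finally show "z t = finsum_vec TYPE(real) p (\<lambda>k. \<alpha> k *\<^sub>v z (t - k)) {1..q}
                       + finsum_vec TYPE(real) p (\<lambda>k. \<beta> k *\<^sub>v u (t - k)) {1..q}" .
qed

end
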